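(* (Fundamental Theorem of Calculus for piecewise continuous functions) For every $u\in\mathfrak{U}(\mathbb{R})$ and every $\gamma_n<\gamma_m$ in $\Gamma$, $$\int_{\gamma_n}^{\gamma_m}D_2u(x)\,dx=\sum_{i=n}^{m-1}\left[u^-(\gamma_{i+1})-u^+(\gamma_i)\right].$$
   Context: Framework (Λ-limits / nonstandard analysis): $\mathfrak{X}=\mathcal{P}_{fin}(\mathfrak{F}(\mathbb{R},\mathbb{R}))$ directed by inclusion; $\mathbb{R}^*\supset\mathbb{R}$ is a non-Archimedean ordered field of Λ-limits of nets $\mathfrak{X}\to\mathbb{R}$; internal sets/functions, natural extensions $E^*,f^*$, hyperfinite sums are defined via Λ-limits; for internal $u$, $\int_a^bu\,dx$ means $(\int_a^b)^*u\,dx$. For $\lambda\in\mathfrak{X}$, $V_\lambda$ is the span of $\lambda$; an internal $u=\lim_{\lambda\uparrow\Lambda}u_\lambda$ is an ultrafunction if $u_\lambda\in V_\lambda$ for all $\lambda$; for a vector space $W$ of real functions, $\widetilde{W}=W^*\cap\{\text{ultrafunctions}\}$. Grid: a positive infinite $\beta\in\mathbb{R}^*$, a hyperfinite $\Gamma=\{\gamma_0<\dots<\gamma_\ell\}\subset\mathbb{R}^*$ with $\gamma_0=-\beta$, $\gamma_\ell=\beta$, $0<\gamma_{j+1}-\gamma_j<\eta$ for a fixed infinitesimal $\eta$, and $\mathbb{R}\subseteq\Gamma$; $\mathbb{I}_j=(\gamma_j,\gamma_{j+1})_{\mathbb{R}^*}$ with characteristic function $\chi_j$. $\mathfrak{U}(\mathbb{R})$: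 functions $u:[-\beta,\beta]\to\mathbb{R}^*$ of the form $\sum_{j=0}^{\ell-1}v_j\chi_j$ with $v_j\in\widetilde{\mathcal{C}^1(\mathbb{R})}$, with the $L^2$ inner product $\int^*uv$; $u^\pm(\gamma_j)$ are the internal one-sided limits of $u$ at grid points. For $u=\sum_jv_j\chi_j\in\mathfrak{U}(\mathbb{R})$, $u'=\sum_jv_j'\chi_j$ (piecewise derivative) and $D_2u=P_{\mathfrak{U}}(u')$, where $P_{\mathfrak{U}}$ is the orthogonal projection onto $\mathfrak{U}(\mathbb{R})$ in $[L^2(\mathbb{R})]^*$. *)

theory Defs
  imports "HOL-Analysis.Analysis"
begin

text \<open>Index set X = P_fin(F(R,R)); an internal object is represented by a net
  X -> (standard object); its Lambda-limit is determined by a fine ultrafilter L on X.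
  Two Lambda-limits are equal iff the nets agree L-eventually.\<close>

type_synonym idx = "(real \<Rightarrow> real) set"

definition fine_ultra :: "idx filter \<Rightarrow> bool" where
  "fine_ultra L \<longleftrightarrow> L \<noteq> bot
     \<and> (\<forall>P. eventually P L \<or> eventually (\<lambda>x. \<not> P x) L)
     \<and> eventually finite L
     \<and> (\<forall>\<mu>. finite \<mu> \<longrightarrow> eventually (\<lambda>lam. \<mu> \<subseteq> lam) L)"

definition Vspan :: "idx \<Rightarrow> (real \<Rightarrow> real) set" where
  "Vspan lam = {f. \<exists>c. f = (\<lambda>x. \<Sum>h\<in>lam. c h * h x)}"

definition chi :: "(nat \<Rightarrow> real) \<Rightarrow> nat \<Rightarrow> real \<Rightarrow> real" where
  "chi g j x = indicator {g j<..<g (Suc j)} x"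

definition pw :: "(nat \<Rightarrow> real) \<Rightarrow> nat \<Rightarrow> (nat \<Rightarrow> real \<Rightarrow> real) \<Rightarrow> real \<Rightarrow> real" where
  "pw g l v x = (\<Sum>j<l. v j x * chi g j x)"

definition Uspace :: "idx \<Rightarrow> (nat \<Rightarrow> real) \<Rightarrow> nat \<Rightarrow> (real \<Rightarrow> real) set" where
  "Uspace lam g l = {pw g l w | w. \<forall>j<l. w j \<in> Vspan lam \<and> w j C1_differentiable_on UNIV}"

definition pw_deriv :: "(nat \<Rightarrow> real) \<Rightarrow> nat \<Rightarrow> (nat \<Rightarrow> real \<Rightarrow> real) \<Rightarrow> real \<Rightarrow> real" where
  "pw_deriv g l v = pw g l (\<lambda>j. deriv (v j))"

definition L2proj :: "(real \<Rightarrow> real) set \<Rightarrow> (real \<Rightarrow> real) \<Rightarrow> real \<Rightarrow> real" where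
  "L2proj U f = (THE w. w \<in> U \<and> (\<forall>z\<in>U. integral UNIV (\<lambda>x. (f x - w x) * z x) = 0))"

definition D2 :: "idx \<Rightarrow> (nat \<Rightarrow> real) \<Rightarrow> nat \<Rightarrow> (nat \<Rightarrow> real \<Rightarrow> real) \<Rightarrow> real \<Rightarrow> real" where
  "D2 lam g l v = L2proj (Uspace lam g l) (pw_deriv g l v)"

text \<open>Grid: beta positive infinite, eta positive infinitesimal, Gamma = {g 0 < ... < g l}
  hyperfinite with g 0 = -beta, g l = beta, gaps in (0, eta), and R subset Gamma.\<close>
definition hgrid :: "idx filter \<Rightarrow> (idx \<Rightarrow> real) \<Rightarrow> (idx \<Rightarrow> real) \<Rightarrow> (idx \<Rightarrow> nat)
    \<Rightarrow> (idx \<Rightarrow> nat \<Rightarrow> real) \<Rightarrow> bool" where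
  "hgrid L beta eta l g \<longleftrightarrow>
     (\<forall>r::real. eventually (\<lambda>lam. r < beta lam) L)
   \<and> (\<forall>e::real. e > 0 \<longrightarrow> eventually (\<lambda>lam. 0 < eta lam \<and> eta lam < e) L)
   \<and> eventually (\<lambda>lam. g lam 0 = - beta lam \<and> g lam (l lam) = beta lam
        \<and> (\<forall>j<l lam. 0 < g lam (Suc j) - g lam j \<and> g lam (Suc j) - g lam j < eta lam)) L
   \<and> (\<forall>r::real. eventually (\<lambda>lam. \<exists>j\<le>l lam. g lam j = r) L)"

end

theory Submission
  imports Defs
begin

text \<open>Let z be the piecewise function equal to 1 on the grid intervals between \<gamma>_n and \<gamma>_m
  and 0 elsewhere; it lies in U because the constant 1 lies in V_\<lambda>. Since D_2 u - u' is
  orthogonal to U, the integral of D_2 u over [\<gamma>_n, \<gamma>_m] equals <D_2 u, z> = <u', z>, which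
  is the sum of the ordinary integrals of v_j' over the grid intervals; the classical fundamental
  theorem of calculus turns it into the sum of jumps. The projection exists because U is spanned
  by finitely many functions on which the L2 pairing is definite: adjoining one spanning function
  at a time, the projection onto the larger space is obtained by a Gram-Schmidt correction.\<close>

subsection \<open>Orthogonal projection onto finitely spanned spaces of real functions\<close>

definition L2_inner :: "(real \<Rightarrow> real) \<Rightarrow> (real \<Rightarrow> real) \<Rightarrow> real" where
  "L2_inner x y = integral UNIV (\<lambda>t. x t * y t)"

definition fun_subspace :: "(real \<Rightarrow> real) set \<Rightarrow> bool" where
  "fun_subspace U \<longleftrightarrow> (\<lambda>_. 0) \<in> U \<and> (\<forall>x\<in>U. \<forall>y\<in>U. \<forall>c. (\<lambda>t. x t + c * y t) \<in> U)"

definition fun_span :: "('i \<Rightarrow> real \<Rightarrow> real) \<Rightarrow> 'i set \<Rightarrow> (real \<Rightarrow> real) set" where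
  "fun_span B I = {h. \<exists>c. h = (\<lambda>t. \<Sum>i\<in>I. c i * B i t)}"

text \<open>All products within W are integrable, so L2_inner is bilinear on W; outside such a space
  it is not, since the integral of a non-integrable function is 0.\<close>
definition pairing_subspace :: "(real \<Rightarrow> real) set \<Rightarrow> bool" where
  "pairing_subspace W \<longleftrightarrow> fun_subspace W \<and> (\<forall>x\<in>W. \<forall>y\<in>W. (\<lambda>t. x t * y t) integrable_on UNIV)"

definition L2_definite :: "(real \<Rightarrow> real) set \<Rightarrow> bool" where
  "L2_definite U \<longleftrightarrow> (\<forall>u\<in>U. L2_inner u u = 0 \<longrightarrow> u = (\<lambda>_. 0))"

definition is_L2_projection :: "(real \<Rightarrow> real) set \<Rightarrow> (real \<Rightarrow> real) \<Rightarrow> (real \<Rightarrow> real) \<Rightarrow> bool" where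
  "is_L2_projection U f w \<longleftrightarrow> w \<in> U \<and> (\<forall>z\<in>U. L2_inner (\<lambda>t. f t - w t) z = 0)"

lemma fun_subspace_zero: "fun_subspace U \<Longrightarrow> (\<lambda>_. 0) \<in> U"
  by (simp add: fun_subspace_def)

lemma fun_subspace_add_scaled:
  "fun_subspace U \<Longrightarrow> x \<in> U \<Longrightarrow> y \<in> U \<Longrightarrow> (\<lambda>t. x t + c * y t) \<in> U"
  by (simp add: fun_subspace_def)

lemma fun_subspace_diff_scaled:
  assumes "fun_subspace U" "x \<in> U" "y \<in> U"
  shows "(\<lambda>t. x t - c * y t) \<in> U"
  using fun_subspace_add_scaled[OF assms, of "- c"] by simp

lemma fun_subspace_Int: "fun_subspace U \<Longrightarrow> fun_subspace V \<Longrightarrow> fun_subspace (U \<inter> V)"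
  unfolding fun_subspace_def by blast

lemma fun_subspace_fun_span: "fun_subspace (fun_span B I)"
  unfolding fun_subspace_def fun_span_def
proof (intro conjI ballI allI)
  show "(\<lambda>_. 0) \<in> {h. \<exists>c. h = (\<lambda>t. \<Sum>i\<in>I. c i * B i t)}"
    by (auto intro: exI[of _ "\<lambda>_. 0"])
next
  fix x y and a :: real
  assume "x \<in> {h. \<exists>c. h = (\<lambda>t. \<Sum>i\<in>I. c i * B i t)}" "y \<in> {h. \<exists>c. h = (\<lambda>t. \<Sum>i\<in>I. c i * B i t)}"
  then obtain c d where "x = (\<lambda>t. \<Sum>i\<in>I. c i * B i t)" "y = (\<lambda>t. \<Sum>i\<in>I. d i * B i t)"
    by blast
  then show "(\<lambda>t. x t + a * y t) \<in> {h. \<exists>c. h = (\<lambda>t. \<Sum>i\<in>I. c i * B i t)}"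
    by (auto intro!: exI[of _ "\<lambda>i. c i + a * d i"]
        simp: sum.distrib sum_distrib_left algebra_simps)
qed

lemma fun_span_insert_decompose:
  assumes "finite I" "s \<notin> I"
    and u0: "u0 \<in> fun_span B (insert s I)" "u0 \<notin> fun_span B I"
    and z: "z \<in> fun_span B (insert s I)"
  shows "\<exists>a. (\<lambda>t. z t - a * u0 t) \<in> fun_span B I"
proof -
  obtain c0 where c0: "u0 = (\<lambda>t. c0 s * B s t + (\<Sum>i\<in>I. c0 i * B i t))"
    using u0(1) assms(1,2) by (auto simp: fun_span_def)
  obtain c where c: "z = (\<lambda>t. c s * B s t + (\<Sum>i\<in>I. c i * B i t))"
    using z assms(1,2) by (auto simp: fun_span_def)
  have "c0 s \<noteq> 0"
    using u0(2) c0 by (auto simp: fun_span_def)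
  then have eq: "(\<lambda>t. z t - c s / c0 s * u0 t) = (\<lambda>t. \<Sum>i\<in>I. (c i - c s / c0 s * c0 i) * B i t)"
    unfolding c c0 by (auto simp: sum_subtractf sum_distrib_left algebra_simps)
  then show ?thesis
    unfolding fun_span_def mem_Collect_eq
    by (intro exI[of _ "c s / c0 s"] exI[of _ "\<lambda>i. c i - c s / c0 s * c0 i"]) (rule eq)
qed

lemma L2_inner_commute: "L2_inner x y = L2_inner y x"
  unfolding L2_inner_def by (simp add: mult.commute)

lemma L2_inner_add_scaled_left:
  assumes "pairing_subspace W" "x \<in> W" "y \<in> W" "z \<in> W"
  shows "L2_inner (\<lambda>t. x t + c * y t) z = L2_inner x z + c * L2_inner y z"
proof -
  have "(\<lambda>t. x t * z t) integrable_on UNIV" "(\<lambda>t. y t * z t) integrable_on UNIV"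
    using assms by (auto simp: pairing_subspace_def)
  moreover have "(\<lambda>t. c * (y t * z t)) integrable_on UNIV"
    using integrable_cmul[OF calculation(2), of c] by simp
  ultimately show ?thesis
    unfolding L2_inner_def by (simp add: distrib_right mult.assoc integral_add)
qed

lemma L2_inner_diff_scaled_left:
  assumes "pairing_subspace W" "x \<in> W" "y \<in> W" "z \<in> W"
  shows "L2_inner (\<lambda>t. x t - c * y t) z = L2_inner x z - c * L2_inner y z"
  using L2_inner_add_scaled_left[OF assms, of "- c"] by simp

lemma L2_projection_add_direction:
  assumes W: "pairing_subspace W" and U: "fun_subspace U" "U \<subseteq> W" "U' \<subseteq> U"
    and e: "e \<in> U" "L2_inner e e \<noteq> 0" "\<forall>y\<in>U'. L2_inner e y = 0"
    and decompose: "\<forall>z\<in>U. \<exists>a. (\<lambda>t. z t - a * e t) \<in> U'"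
    and w': "is_L2_projection U' f w'" and f: "f \<in> W"
  shows "is_L2_projection U f (\<lambda>t. w' t + L2_inner (\<lambda>t. f t - w' t) e / L2_inner e e * e t)"
proof -
  define c where "c = L2_inner (\<lambda>t. f t - w' t) e / L2_inner e e"
  define r where "r = (\<lambda>t. (f t - w' t) - c * e t)"
  have inW: "e \<in> W" "(\<lambda>t. f t - w' t) \<in> W"
    using e(1) U w' fun_subspace_diff_scaled[OF _ f, of w' 1] W
    by (auto simp: is_L2_projection_def pairing_subspace_def)
  have rW: "r \<in> W"
    unfolding r_def using fun_subspace_diff_scaled[OF _ inW(2,1)] W by (simp add: pairing_subspace_def)
  have "L2_inner r e = L2_inner (\<lambda>t. f t - w' t) e - c * L2_inner e e"
    unfolding r_def by (rule L2_inner_diff_scaled_left[OF W inW(2,1) inW(1)])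
  then have r_e: "L2_inner r e = 0"
    using e(2) by (simp add: c_def)
  have r_U': "L2_inner r y = 0" if "y \<in> U'" for y
  proof -
    have "y \<in> W"
      using that U by blast
    then have "L2_inner r y = L2_inner (\<lambda>t. f t - w' t) y - c * L2_inner e y"
      unfolding r_def by (rule L2_inner_diff_scaled_left[OF W inW(2,1)])
    then show ?thesis
      using that w' e(3) by (simp add: is_L2_projection_def)
  qed
  show ?thesis
    unfolding is_L2_projection_def c_def[symmetric]
  proof (intro conjI ballI)
    show "(\<lambda>t. w' t + c * e t) \<in> U"
      using fun_subspace_add_scaled[OF U(1) _ e(1)] w' U by (auto simp: is_L2_projection_def)
  next
    fix z assume "z \<in> U"
    then obtain a where y: "(\<lambda>t. z t - a * e t) \<in> U'"
      using decompose by blast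
    then have "(\<lambda>t. z t - a * e t) \<in> W"
      using U by blast
    then have "L2_inner (\<lambda>t. (z t - a * e t) + a * e t) r
        = L2_inner (\<lambda>t. z t - a * e t) r + a * L2_inner e r"
      by (rule L2_inner_add_scaled_left[OF W _ inW(1) rW])
    moreover have "(\<lambda>t. (z t - a * e t) + a * e t) = z" "(\<lambda>t. f t - (w' t + c * e t)) = r"
      by (auto simp: r_def)
    ultimately show "L2_inner (\<lambda>t. f t - (w' t + c * e t)) z = 0"
      using r_e r_U'[OF y] by (simp add: L2_inner_commute)
  qed
qed

lemma L2_projection_extend:
  assumes W: "pairing_subspace W" and U: "fun_subspace U" "U \<subseteq> W" "L2_definite U"
    and U': "fun_subspace U'" "U' \<subseteq> U"
    and u0: "u0 \<in> U" "u0 \<notin> U'" and decompose: "\<forall>z\<in>U. \<exists>a. (\<lambda>t. z t - a * u0 t) \<in> U'"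
    and proj': "\<forall>h\<in>W. \<exists>w. is_L2_projection U' h w"
    and f: "f \<in> W"
  shows "\<exists>w. is_L2_projection U f w"
proof -
  obtain p0 where p0: "p0 \<in> U'" "\<forall>y\<in>U'. L2_inner (\<lambda>t. u0 t - p0 t) y = 0"
    using proj' u0(1) U(2) unfolding is_L2_projection_def by blast
  define e where "e = (\<lambda>t. u0 t - p0 t)"
  have eU: "e \<in> U"
    unfolding e_def using fun_subspace_diff_scaled[OF U(1) u0(1), of p0 1] p0(1) U' by auto
  have "e \<noteq> (\<lambda>_. 0)"
  proof
    assume "e = (\<lambda>_. 0)"
    then have "u0 = p0" by (auto simp: e_def fun_eq_iff)
    with u0(2) p0(1) show False by simp
  qed
  then have ee: "L2_inner e e \<noteq> 0"
    using U(3) eU by (auto simp: L2_definite_def)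
  have e_orth: "\<forall>y\<in>U'. L2_inner e y = 0"
    using p0(2) by (simp add: e_def)
  have decompose_e: "\<forall>z\<in>U. \<exists>a. (\<lambda>t. z t - a * e t) \<in> U'"
  proof
    fix z assume "z \<in> U"
    then obtain a where "(\<lambda>t. z t - a * u0 t) \<in> U'"
      using decompose by blast
    then have "(\<lambda>t. (z t - a * u0 t) + a * p0 t) \<in> U'"
      using fun_subspace_add_scaled[OF U'(1) _ p0(1)] by blast
    moreover have "(\<lambda>t. (z t - a * u0 t) + a * p0 t) = (\<lambda>t. z t - a * e t)"
      by (simp add: e_def algebra_simps)
    ultimately show "\<exists>a. (\<lambda>t. z t - a * e t) \<in> U'"
      by (intro exI[of _ a]) simp
  qed
  obtain w' where "is_L2_projection U' f w'"
    using proj' f by blast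
  then show ?thesis
    using L2_projection_add_direction[OF W U(1,2) U'(2) eU ee e_orth decompose_e _ f] by blast
qed

lemma L2_projection_exists:
  assumes "finite I" "pairing_subspace W"
  shows "fun_subspace U \<Longrightarrow> U \<subseteq> W \<Longrightarrow> U \<subseteq> fun_span B I \<Longrightarrow> L2_definite U \<Longrightarrow> f \<in> W
    \<Longrightarrow> \<exists>w. is_L2_projection U f w"
  using assms(1)
proof (induction I arbitrary: U f rule: finite_induct)
  case empty
  then have "U = {\<lambda>_. 0}"
    using fun_subspace_zero[of U] by (auto simp: fun_span_def)
  then show ?case
    by (auto simp: is_L2_projection_def L2_inner_def)
next
  case (insert s I)
  define U' where "U' = U \<inter> fun_span B I"
  have U': "fun_subspace U'" "U' \<subseteq> U" "U' \<subseteq> fun_span B I" "L2_definite U'"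
    using insert.prems by (auto simp: U'_def L2_definite_def intro: fun_subspace_Int fun_subspace_fun_span)
  have proj': "\<forall>h\<in>W. \<exists>w. is_L2_projection U' h w"
    using insert.IH U' insert.prems(2) by blast
  show ?case
  proof (cases "U \<subseteq> fun_span B I")
    case True
    then show ?thesis using proj' insert.prems(5) by (simp add: U'_def Int_absorb2)
  next
    case False
    then obtain u0 where u0: "u0 \<in> U" "u0 \<notin> fun_span B I" by auto
    have "\<exists>a. (\<lambda>t. z t - a * u0 t) \<in> U'" if z: "z \<in> U" for z
    proof -
      obtain a where "(\<lambda>t. z t - a * u0 t) \<in> fun_span B I"
        using fun_span_insert_decompose[OF insert.hyps, of u0 B z] u0 z insert.prems(3) by blast
      then show ?thesis
        using fun_subspace_diff_scaled[OF insert.prems(1) z u0(1)] by (auto simp: U'_def)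
    qed
    then show ?thesis
      using L2_projection_extend[OF assms(2) insert.prems(1,2,4) U'(1,2), of u0] u0 proj' insert.prems(5)
      by (auto simp: U'_def)
  qed
qed

lemma L2_projection_unique:
  assumes W: "pairing_subspace W" and U: "fun_subspace U" "U \<subseteq> W" "L2_definite U" and f: "f \<in> W"
    and w1: "is_L2_projection U f w1" and w2: "is_L2_projection U f w2"
  shows "w1 = w2"
proof -
  have WW: "fun_subspace W" using W by (simp add: pairing_subspace_def)
  define d where "d = (\<lambda>t. w1 t - w2 t)"
  have dU: "d \<in> U"
    unfolding d_def using fun_subspace_diff_scaled[OF U(1), of w1 w2 1] w1 w2
    by (simp add: is_L2_projection_def)
  have r: "(\<lambda>t. f t - w1 t) \<in> W" "(\<lambda>t. f t - w2 t) \<in> W"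
    using fun_subspace_diff_scaled[OF WW f, of _ 1] w1 w2 U(2) by (auto simp: is_L2_projection_def)
  have "(\<lambda>t. (f t - w2 t) - 1 * (f t - w1 t)) = d"
    by (auto simp: d_def)
  then have "L2_inner d d = 0"
    using L2_inner_diff_scaled_left[OF W r(2,1), of d 1] dU U(2) w1 w2
    by (auto simp: is_L2_projection_def)
  then show ?thesis
    using U(3) dU by (auto simp: L2_definite_def d_def fun_eq_iff)
qed

lemma L2proj_is_projection:
  assumes "finite I" "pairing_subspace W" "fun_subspace U" "U \<subseteq> W" "U \<subseteq> fun_span B I"
    "L2_definite U" "f \<in> W"
  shows "is_L2_projection U f (L2proj U f)"
proof -
  have "\<exists>!w. is_L2_projection U f w"
    using L2_projection_exists[OF assms(1,2)] L2_projection_unique[OF assms(2,3,4,6,7)] assms(3-7)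
    by blast
  moreover have "L2proj U f = (THE w. is_L2_projection U f w)"
    unfolding L2proj_def is_L2_projection_def L2_inner_def ..
  ultimately show ?thesis
    using theI' by metis
qed

subsection \<open>Piecewise functions on a grid\<close>

lemma grid_strict_mono:
  assumes mono: "\<forall>j<l. g j < g (Suc j)" and "i < j" "j \<le> l"
  shows "g i < (g j :: real)"
  using assms(2,3)
proof (induction j)
  case (Suc j)
  moreover have "g j < g (Suc j)"
    using mono Suc.prems by simp
  ultimately show ?case
    by (cases "i = j") auto
qed simp

lemma grid_mono:
  assumes "\<forall>j<l. g j < g (Suc j)" and "i \<le> j" "j \<le> l"
  shows "g i \<le> (g j :: real)"
  using grid_strict_mono[OF assms(1), of i j] assms(2,3) by (cases "i = j") auto

lemma chi_grid:
  assumes mono: "\<forall>j<l. g j < g (Suc j)" and "j < l" "k < l" and t: "t \<in> {g j<..<g (Suc j)}"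
  shows "chi g k t = (if k = j then 1 else 0)"
proof (cases "k = j")
  case False
  then have "g (Suc k) \<le> g j \<or> g (Suc j) \<le> g k"
    using grid_mono[OF mono, of "Suc k" j] grid_mono[OF mono, of "Suc j" k] assms(2,3) by linarith
  then show ?thesis
    using t False by (auto simp: chi_def)
qed (use t in \<open>simp add: chi_def\<close>)

lemma pw_on_grid_interval:
  assumes mono: "\<forall>j<l. g j < g (Suc j)" and j: "j < l" and t: "t \<in> {g j<..<g (Suc j)}"
  shows "pw g l a t = a j t"
proof -
  have "pw g l a t = (\<Sum>k<l. if k = j then a j t else 0)"
    unfolding pw_def using chi_grid[OF mono j _ t] by (intro sum.cong) auto
  then show ?thesis
    using j by simp
qed

lemma pw_off_grid_intervals:
  assumes "\<forall>j<l. t \<notin> {g j<..<g (Suc j)}"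
  shows "pw g l a t = 0"
  using assms by (simp add: pw_def chi_def)

lemma pw_add_scaled: "pw g l (\<lambda>j t. a j t + c * b j t) t = pw g l a t + c * pw g l b t"
  by (simp add: pw_def sum.distrib sum_distrib_left algebra_simps)

lemma pw_mult:
  assumes mono: "\<forall>j<l. g j < g (Suc j)"
  shows "pw g l a t * pw g l b t = pw g l (\<lambda>j t. a j t * b j t) t"
proof (cases "\<exists>j<l. t \<in> {g j<..<g (Suc j)}")
  case True
  then obtain j where "j < l" "t \<in> {g j<..<g (Suc j)}" by blast
  then show ?thesis
    using pw_on_grid_interval[OF mono] by simp
qed (simp add: pw_off_grid_intervals)

lemma has_integral_mult_chi:
  fixes c :: "real \<Rightarrow> real"
  assumes "continuous_on {g j..g (Suc j)} c"
  shows "((\<lambda>t. c t * chi g j t) has_integral integral {g j..g (Suc j)} c) UNIV"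
proof -
  have "(\<lambda>t. c t * chi g j t) = (\<lambda>t. if t \<in> {g j<..<g (Suc j)} then c t else 0)"
    by (auto simp: chi_def)
  moreover have "(c has_integral integral {g j..g (Suc j)} c) {g j<..<g (Suc j)}"
    using integrable_continuous_real[OF assms]
    by (simp add: has_integral_Icc_iff_Ioo[symmetric] integrable_integral)
  ultimately show ?thesis
    by (simp only: has_integral_restrict_UNIV)
qed

lemma has_integral_pw:
  assumes "\<forall>j<l. continuous_on UNIV (a j)"
  shows "(pw g l a has_integral (\<Sum>j<l. integral {g j..g (Suc j)} (a j))) UNIV"
  unfolding pw_def
  using assms by (intro has_integral_sum has_integral_mult_chi) (auto intro: continuous_on_subset)

lemma has_integral_pw_mult:
  assumes mono: "\<forall>j<l. g j < g (Suc j)"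
    and "\<forall>j<l. continuous_on UNIV (a j)" "\<forall>j<l. continuous_on UNIV (b j)"
  shows "((\<lambda>t. pw g l a t * pw g l b t) has_integral
           (\<Sum>j<l. integral {g j..g (Suc j)} (\<lambda>t. a j t * b j t))) UNIV"
  unfolding pw_mult[OF mono]
  using assms(2,3) by (intro has_integral_pw) (auto intro: continuous_intros)

lemma L2_inner_pw_grid_indicator:
  assumes mono: "\<forall>j<l. g j < g (Suc j)" and a: "\<forall>j<l. continuous_on UNIV (a j)" and "m \<le> l"
  shows "L2_inner (pw g l a) (pw g l (\<lambda>j _. if j \<in> {n..<m} then 1 else 0))
    = (\<Sum>j\<in>{n..<m}. integral {g j..g (Suc j)} (a j))"
proof -
  have "L2_inner (pw g l a) (pw g l (\<lambda>j _. if j \<in> {n..<m} then 1 else 0))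
      = (\<Sum>j<l. integral {g j..g (Suc j)} (\<lambda>t. a j t * (if j \<in> {n..<m} then 1 else 0)))"
    unfolding L2_inner_def using a by (intro integral_unique has_integral_pw_mult[OF mono]) auto
  also have "\<dots> = (\<Sum>j<l. if j \<in> {n..<m} then integral {g j..g (Suc j)} (a j) else 0)"
    by (intro sum.cong) auto
  also have "\<dots> = (\<Sum>j\<in>{..<l} \<inter> {n..<m}. integral {g j..g (Suc j)} (a j))"
    by (simp add: sum.inter_restrict)
  also have "{..<l} \<inter> {n..<m} = {n..<m}"
    using assms(3) by auto
  finally show ?thesis .
qed

lemma integral_pw_grid_interval:
  assumes mono: "\<forall>j<l. g j < g (Suc j)" and a: "\<forall>j<l. continuous_on UNIV (a j)"
    and "n \<le> m" "m \<le> l"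
  shows "integral {g n..g m} (pw g l a) = (\<Sum>j\<in>{n..<m}. integral {g j..g (Suc j)} (a j))"
  using assms(3,4)
proof (induction m rule: dec_induct)
  case (step m)
  have int: "pw g l a integrable_on {g n..g (Suc m)}"
    using has_integral_pw[OF a] by (blast intro: integrable_on_subinterval)
  have "integral {g m..g (Suc m)} (pw g l a) = integral {g m<..<g (Suc m)} (a m)"
    unfolding integral_open_interval_real
    using pw_on_grid_interval[OF mono] step.prems by (intro integral_cong) auto
  moreover have "integral {g n..g (Suc m)} (pw g l a)
      = integral {g n..g m} (pw g l a) + integral {g m..g (Suc m)} (pw g l a)"
    using grid_mono[OF mono, of n m] grid_mono[OF mono, of m "Suc m"] step
    by (intro Henstock_Kurzweil_Integration.integral_combine[symmetric, OF _ _ int]) auto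
  ultimately show ?case
    using step by (simp add: integral_open_interval_real)
qed simp

lemma pw_zero_if_L2_inner_self_zero:
  assumes mono: "\<forall>j<l. g j < g (Suc j)" and a: "\<forall>j<l. continuous_on UNIV (a j)"
    and zero: "L2_inner (pw g l a) (pw g l a) = 0"
  shows "pw g l a = (\<lambda>_. 0)"
proof
  fix t
  have sq_cont: "continuous_on {g j..g (Suc j)} (\<lambda>t. a j t * a j t)" if "j < l" for j
    using a that by (auto intro: continuous_intros continuous_on_subset)
  have "(\<Sum>j<l. integral {g j..g (Suc j)} (\<lambda>t. a j t * a j t)) = 0"
    using zero has_integral_pw_mult[OF mono a a] by (simp add: L2_inner_def integral_unique)
  moreover have "integral {g j..g (Suc j)} (\<lambda>t. a j t * a j t) \<ge> 0" if "j < l" for j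
    using integrable_continuous_real[OF sq_cont[OF that]] by (simp add: integral_nonneg)
  ultimately have "integral {g j..g (Suc j)} (\<lambda>t. a j t * a j t) = 0" if "j < l" for j
    using sum_nonneg_eq_0_iff[OF finite_lessThan, of l "\<lambda>j. integral {g j..g (Suc j)} (\<lambda>t. a j t * a j t)"]
      that by simp
  then have "\<forall>t\<in>{g j..g (Suc j)}. a j t * a j t = 0" if "j < l" for j
    using integral_eq_0_iff[OF sq_cont] mono that by simp
  then show "pw g l a t = 0"
    using pw_on_grid_interval[OF mono] pw_off_grid_intervals[of l t g a] by fastforce
qed

lemma Lim_at_left_pw:
  assumes mono: "\<forall>j<l. g j < g (Suc j)" and j: "j < l" and "continuous_on UNIV (a j)"
  shows "Lim (at_left (g (Suc j))) (pw g l a) = a j (g (Suc j))"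
proof (rule tendsto_Lim[OF trivial_limit_at_left_real])
  have inside: "eventually (\<lambda>t. t \<in> {g j<..<g (Suc j)}) (at_left (g (Suc j)))"
    using mono j by (intro eventually_at_left_real) auto
  have "(a j \<longlongrightarrow> a j (g (Suc j))) (at_left (g (Suc j)))"
    using assms(3) by (auto intro: tendsto_mono[OF at_le] simp: continuous_on_def)
  then show "(pw g l a \<longlongrightarrow> a j (g (Suc j))) (at_left (g (Suc j)))"
    by (rule Lim_transform_eventually)
      (rule eventually_mono[OF inside], simp add: pw_on_grid_interval[OF mono j])
qed

lemma Lim_at_right_pw:
  assumes mono: "\<forall>j<l. g j < g (Suc j)" and j: "j < l" and "continuous_on UNIV (a j)"
  shows "Lim (at_right (g j)) (pw g l a) = a j (g j)"
proof (rule tendsto_Lim[OF trivial_limit_at_right_real])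
  have inside: "eventually (\<lambda>t. t \<in> {g j<..<g (Suc j)}) (at_right (g j))"
    using mono j by (intro eventually_at_right_real) auto
  have "(a j \<longlongrightarrow> a j (g j)) (at_right (g j))"
    using assms(3) by (auto intro: tendsto_mono[OF at_le] simp: continuous_on_def)
  then show "(pw g l a \<longlongrightarrow> a j (g j)) (at_right (g j))"
    by (rule Lim_transform_eventually)
      (rule eventually_mono[OF inside], simp add: pw_on_grid_interval[OF mono j])
qed

definition pw_continuous :: "(nat \<Rightarrow> real) \<Rightarrow> nat \<Rightarrow> (real \<Rightarrow> real) set" where
  "pw_continuous g l = {pw g l a | a. \<forall>j<l. continuous_on UNIV (a j)}"

lemma pw_continuousE:
  assumes "x \<in> pw_continuous g l"
  obtains a where "x = pw g l a" "\<forall>j<l. continuous_on UNIV (a j)"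
  using assms unfolding pw_continuous_def by blast

lemma pairing_subspace_pw_continuous:
  assumes mono: "\<forall>j<l. g j < g (Suc j)"
  shows "pairing_subspace (pw_continuous g l)"
proof -
  have "(\<lambda>_. 0) = pw g l (\<lambda>_ _. 0)"
    by (simp add: pw_def fun_eq_iff)
  then have zero: "(\<lambda>_. 0) \<in> pw_continuous g l"
    unfolding pw_continuous_def by (intro CollectI exI[of _ "\<lambda>_ _. 0"]) simp
  have closed: "(\<lambda>t. x t + c * y t) \<in> pw_continuous g l" and
    integrable: "(\<lambda>t. x t * y t) integrable_on UNIV"
    if x: "x \<in> pw_continuous g l" and y: "y \<in> pw_continuous g l" for x y c
  proof -
    obtain a where a: "x = pw g l a" "\<forall>j<l. continuous_on UNIV (a j)"
      using x by (rule pw_continuousE)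
    obtain b where b: "y = pw g l b" "\<forall>j<l. continuous_on UNIV (b j)"
      using y by (rule pw_continuousE)
    have "(\<lambda>t. x t + c * y t) = pw g l (\<lambda>j t. a j t + c * b j t)"
      unfolding a(1) b(1) by (simp add: pw_add_scaled fun_eq_iff)
    moreover have "\<forall>j<l. continuous_on UNIV (\<lambda>t. a j t + c * b j t)"
      using a(2) b(2) by (simp add: continuous_on_add continuous_on_mult_left)
    ultimately show "(\<lambda>t. x t + c * y t) \<in> pw_continuous g l"
      unfolding pw_continuous_def by (intro CollectI exI[of _ "\<lambda>j t. a j t + c * b j t"] conjI)
    show "(\<lambda>t. x t * y t) integrable_on UNIV"
      unfolding a(1) b(1) using has_integral_pw_mult[OF mono a(2) b(2)] by blast
  qed
  show ?thesis
    unfolding pairing_subspace_def fun_subspace_def using zero closed integrable by simp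
qed

lemma L2_definite_pw_continuous:
  "\<forall>j<l. g j < g (Suc j) \<Longrightarrow> L2_definite (pw_continuous g l)"
  by (auto simp: L2_definite_def pw_continuous_def intro: pw_zero_if_L2_inner_self_zero)

subsection \<open>The space U and the derivative D_2\<close>

lemma C1_differentiable_on_UNIV_deriv:
  assumes "f C1_differentiable_on UNIV"
  shows "continuous_on UNIV (deriv f)" "(f has_real_derivative deriv f x) (at x)"
proof -
  have "deriv f = (\<lambda>x. vector_derivative f (at x))"
    by (simp add: fun_eq_iff field_derivative_eq_vector_derivative)
  then show "continuous_on UNIV (deriv f)"
    using assms by (simp add: C1_differentiable_on_eq)
  show "(f has_real_derivative deriv f x) (at x)"
    using assms by (simp add: C1_differentiable_on_eq DERIV_deriv_iff_real_differentiable)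
qed

lemma integral_deriv_C1:
  assumes "f C1_differentiable_on UNIV" "a \<le> b"
  shows "integral {a..b} (deriv f) = f b - f a"
proof -
  have "(deriv f has_integral (f b - f a)) {a..b}"
    using C1_differentiable_on_UNIV_deriv(2)[OF assms(1)]
    by (intro fundamental_theorem_of_calculus[OF assms(2)])
      (simp add: has_real_derivative_iff_has_vector_derivative has_vector_derivative_at_within)
  then show ?thesis
    by (rule integral_unique)
qed

lemma Vspan_eq_fun_span: "Vspan lam = fun_span (\<lambda>h. h) lam"
  by (simp add: Vspan_def fun_span_def)

lemma const_one_in_Vspan:
  assumes "finite lam" "(\<lambda>_. 1) \<in> lam"
  shows "(\<lambda>_. 1) \<in> Vspan lam"
proof -
  have "(\<Sum>h\<in>lam. (if h = (\<lambda>_. 1) then 1 else 0) * h x) = 1" for x :: real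
  proof -
    have "(\<Sum>h\<in>lam. (if h = (\<lambda>_. 1) then 1 else 0) * h x) = (\<Sum>h\<in>lam. if h = (\<lambda>_. 1) then 1 else 0)"
      by (intro sum.cong) auto
    then show ?thesis
      using assms by simp
  qed
  then show ?thesis
    unfolding Vspan_def
    by (intro CollectI exI[of _ "\<lambda>h. if h = (\<lambda>_. 1) then 1 else 0"]) (simp add: fun_eq_iff)
qed

lemma fun_subspace_Uspace: "fun_subspace (Uspace lam g l)"
proof -
  have V: "fun_subspace (Vspan lam)"
    unfolding Vspan_eq_fun_span by (rule fun_subspace_fun_span)
  have "(\<lambda>_. 0) = pw g l (\<lambda>_ _. 0)"
    by (simp add: pw_def fun_eq_iff)
  then have zero: "(\<lambda>_. 0) \<in> Uspace lam g l"
    unfolding Uspace_def using fun_subspace_zero[OF V]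
    by (intro CollectI exI[of _ "\<lambda>_ _. 0"]) simp
  have closed: "(\<lambda>t. x t + c * y t) \<in> Uspace lam g l"
    if x: "x \<in> Uspace lam g l" and y: "y \<in> Uspace lam g l" for x y c
  proof -
    obtain a where a: "x = pw g l a" "\<forall>j<l. a j \<in> Vspan lam \<and> a j C1_differentiable_on UNIV"
      using x unfolding Uspace_def by blast
    obtain b where b: "y = pw g l b" "\<forall>j<l. b j \<in> Vspan lam \<and> b j C1_differentiable_on UNIV"
      using y unfolding Uspace_def by blast
    have "(\<lambda>t. x t + c * y t) = pw g l (\<lambda>j t. a j t + c * b j t)"
      unfolding a(1) b(1) by (simp add: pw_add_scaled fun_eq_iff)
    moreover have "\<forall>j<l. (\<lambda>t. a j t + c * b j t) \<in> Vspan lam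
        \<and> (\<lambda>t. a j t + c * b j t) C1_differentiable_on UNIV"
      using a(2) b(2) fun_subspace_add_scaled[OF V] by simp
    ultimately show ?thesis
      unfolding Uspace_def by (intro CollectI exI[of _ "\<lambda>j t. a j t + c * b j t"] conjI)
  qed
  show ?thesis
    unfolding fun_subspace_def using zero closed by simp
qed

lemma Uspace_subset_fun_span:
  "Uspace lam g l \<subseteq> fun_span (\<lambda>(j, h) t. h t * chi g j t) ({..<l} \<times> lam)"
proof
  fix z assume "z \<in> Uspace lam g l"
  then obtain w where w: "z = pw g l w" "\<forall>j<l. w j \<in> Vspan lam"
    unfolding Uspace_def by blast
  then have "\<forall>j\<in>{..<l}. \<exists>c. w j = (\<lambda>x. \<Sum>h\<in>lam. c h * h x)"
    by (auto simp: Vspan_def)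
  then obtain C where C: "\<forall>j\<in>{..<l}. w j = (\<lambda>x. \<Sum>h\<in>lam. C j h * h x)"
    by (metis (no_types) bchoice)
  have "z t = (\<Sum>(j, h)\<in>{..<l} \<times> lam. C j h * (h t * chi g j t))" for t
  proof -
    have "z t = (\<Sum>j<l. (\<Sum>h\<in>lam. C j h * h t) * chi g j t)"
      unfolding w(1) pw_def using C by (intro sum.cong) auto
    also have "\<dots> = (\<Sum>j<l. \<Sum>h\<in>lam. C j h * (h t * chi g j t))"
      by (simp add: sum_distrib_right mult.assoc)
    finally show ?thesis
      by (simp add: sum.cartesian_product)
  qed
  then show "z \<in> fun_span (\<lambda>(j, h) t. h t * chi g j t) ({..<l} \<times> lam)"
    unfolding fun_span_def
    by (intro CollectI exI[of _ "\<lambda>(j, h). C j h"]) (simp add: fun_eq_iff split_def)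
qed

lemma Uspace_subset_pw_continuous: "Uspace lam g l \<subseteq> pw_continuous g l"
  by (auto simp: Uspace_def pw_continuous_def intro: C1_differentiable_imp_continuous_on)

lemma pw_deriv_in_pw_continuous:
  "\<forall>j<l. v j C1_differentiable_on UNIV \<Longrightarrow> pw_deriv g l v \<in> pw_continuous g l"
  unfolding pw_deriv_def pw_continuous_def
  by (auto intro: C1_differentiable_on_UNIV_deriv(1))

lemma D2_is_L2_projection:
  assumes "finite lam" and mono: "\<forall>j<l. g j < g (Suc j)" and "\<forall>j<l. v j C1_differentiable_on UNIV"
  shows "is_L2_projection (Uspace lam g l) (pw_deriv g l v) (D2 lam g l v)"
proof -
  have "L2_definite (Uspace lam g l)"
    using L2_definite_pw_continuous[OF mono] Uspace_subset_pw_continuous[of lam g l]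
    unfolding L2_definite_def by blast
  then show ?thesis
    unfolding D2_def using assms(1)
    by (intro L2proj_is_projection[OF _ pairing_subspace_pw_continuous[OF mono] fun_subspace_Uspace
        Uspace_subset_pw_continuous Uspace_subset_fun_span _ pw_deriv_in_pw_continuous[OF assms(3)]])
      auto
qed

lemma L2_inner_D2_eq_L2_inner_pw_deriv:
  assumes "finite lam" and mono: "\<forall>j<l. g j < g (Suc j)" and C1: "\<forall>j<l. v j C1_differentiable_on UNIV"
    and z: "z \<in> Uspace lam g l"
  shows "L2_inner (D2 lam g l v) z = L2_inner (pw_deriv g l v) z"
proof -
  have proj: "is_L2_projection (Uspace lam g l) (pw_deriv g l v) (D2 lam g l v)"
    using D2_is_L2_projection[OF assms(1) mono C1] .
  then have "D2 lam g l v \<in> pw_continuous g l" "z \<in> pw_continuous g l"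
    using z Uspace_subset_pw_continuous by (auto simp: is_L2_projection_def)
  then show ?thesis
    using L2_inner_diff_scaled_left[OF pairing_subspace_pw_continuous[OF mono]
        pw_deriv_in_pw_continuous[OF C1], of "D2 lam g l v" z 1] proj z
    by (simp add: is_L2_projection_def)
qed

lemma grid_indicator_in_Uspace:
  assumes "finite lam" "(\<lambda>_. 1) \<in> lam"
  shows "pw g l (\<lambda>j _. if j \<in> S then 1 else 0) \<in> Uspace lam g l"
  using const_one_in_Vspan[OF assms] fun_subspace_zero[OF fun_subspace_fun_span]
  unfolding Uspace_def Vspan_eq_fun_span
  by (intro CollectI exI[of _ "\<lambda>j _. if j \<in> S then 1 else 0"]) auto

lemma integral_D2_eq_sum_jumps:
  assumes "finite lam" "(\<lambda>_. 1) \<in> lam" and mono: "\<forall>j<l. g j < g (Suc j)"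
    and v: "\<forall>j<l. v j \<in> Vspan lam \<and> v j C1_differentiable_on UNIV"
    and "n \<le> m" "m \<le> l"
  shows "integral {g n..g m} (D2 lam g l v)
    = (\<Sum>i\<in>{n..<m}. Lim (at_left (g (Suc i))) (pw g l v) - Lim (at_right (g i)) (pw g l v))"
proof -
  define z where "z = pw g l (\<lambda>j _. if j \<in> {n..<m} then 1 else 0)"
  have C1: "\<forall>j<l. v j C1_differentiable_on UNIV"
    using v by blast
  have "D2 lam g l v \<in> pw_continuous g l"
    using D2_is_L2_projection[OF assms(1) mono C1] Uspace_subset_pw_continuous
    by (auto simp: is_L2_projection_def)
  then obtain a where a: "D2 lam g l v = pw g l a" "\<forall>j<l. continuous_on UNIV (a j)"
    by (rule pw_continuousE)
  have "integral {g n..g m} (D2 lam g l v) = (\<Sum>j\<in>{n..<m}. integral {g j..g (Suc j)} (a j))"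
    unfolding a(1) using integral_pw_grid_interval[OF mono a(2) assms(5,6)] .
  also have "\<dots> = L2_inner (D2 lam g l v) z"
    using L2_inner_pw_grid_indicator[OF mono a(2) assms(6)] by (simp add: z_def a(1))
  also have "\<dots> = L2_inner (pw_deriv g l v) z"
    unfolding z_def using L2_inner_D2_eq_L2_inner_pw_deriv[OF assms(1) mono C1]
      grid_indicator_in_Uspace[OF assms(1,2)] by blast
  also have "\<dots> = (\<Sum>j\<in>{n..<m}. integral {g j..g (Suc j)} (deriv (v j)))"
    unfolding z_def pw_deriv_def using C1 assms(6)
    by (intro L2_inner_pw_grid_indicator[OF mono]) (auto intro: C1_differentiable_on_UNIV_deriv(1))
  also have "\<dots> = (\<Sum>j\<in>{n..<m}. v j (g (Suc j)) - v j (g j))"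
    using C1 assms(6) grid_mono[OF mono] by (intro sum.cong refl integral_deriv_C1) auto
  also have "\<dots> = (\<Sum>j\<in>{n..<m}. Lim (at_left (g (Suc j))) (pw g l v) - Lim (at_right (g j)) (pw g l v))"
    using C1 assms(6) by (intro sum.cong refl)
      (simp add: Lim_at_left_pw[OF mono] Lim_at_right_pw[OF mono] C1_differentiable_imp_continuous_on)
  finally show ?thesis .
qed

theorem mainTheorem14:
  fixes L :: "idx filter" and beta eta :: "idx \<Rightarrow> real" and l :: "idx \<Rightarrow> nat"
    and g :: "idx \<Rightarrow> nat \<Rightarrow> real" and v :: "idx \<Rightarrow> nat \<Rightarrow> real \<Rightarrow> real"
    and n m :: "idx \<Rightarrow> nat"
  assumes "fine_ultra L"
    and "hgrid L beta eta l g"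
    and "eventually (\<lambda>lam. \<forall>j<l lam. v lam j \<in> Vspan lam
                                \<and> v lam j C1_differentiable_on UNIV) L"
    and "eventually (\<lambda>lam. n lam \<le> l lam \<and> m lam \<le> l lam
                           \<and> g lam (n lam) < g lam (m lam)) L"
  shows "eventually (\<lambda>lam.
           integral {g lam (n lam) .. g lam (m lam)} (D2 lam (g lam) (l lam) (v lam))
         = (\<Sum>i\<in>{n lam..<m lam}.
              Lim (at_left (g lam (Suc i))) (pw (g lam) (l lam) (v lam))
            - Lim (at_right (g lam i)) (pw (g lam) (l lam) (v lam)))) L"
proof -
  have "eventually finite L" "eventually (\<lambda>lam. {\<lambda>_. 1} \<subseteq> lam) L"
    using assms(1) by (auto simp: fine_ultra_def)
  moreover have "eventually (\<lambda>lam. \<forall>j<l lam. g lam j < g lam (Suc j)) L"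
    using assms(2) unfolding hgrid_def by (auto elim: eventually_mono)
  ultimately show ?thesis
    using assms(3,4)
  proof eventually_elim
    case (elim lam)
    then have "n lam \<le> m lam"
      using grid_strict_mono[of "l lam" "g lam" "m lam" "n lam"] by force
    with elim show ?case
      by (intro integral_D2_eq_sum_jumps) auto
  qed
qed

end
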